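(* Let $(N,\underline X)\in\aleph^{FGM*}$ with $\sup A_N\ge2$, and let $\varphi_0,\varphi_1,\varphi_2$ be functions such that all expectations below exist. Define, for a random variable $Y$ with cdf $F_Y$ and survival function $\bar F_Y$ and an integrable $\phi$, $\Delta(F_Y;\phi)=\int\phi(y)\,dF_Y^2(y)-\int\phi(y)\,d(1-\bar F_Y^2(y))=E[\phi(Y_{[2]})]-E[\phi(Y_{[1]})]$. Then $$E[\varphi_0(N)\varphi_1(X_1)\varphi_2(X_2)]=\sum_{(i_0,i_1,i_2)\in\{0,1\}^3}f_{I_0,I_1,I_2}(i_0,i_1,i_2)\,E[\varphi_0(N_{[1+i_0]})]\,E[\varphi_1(X_{[1+i_1]})]\,E[\varphi_2(X_{[1+i_2]})],$$ where $f_{I_0,I_1,I_2}(i_0,i_1,i_2)=\tfrac18\big(1+(-1)^{i_0+i_1}\theta_{01}+(-1)^{i_0+i_2}\theta_{01}+(-1)^{i_1+i_2}\theta_{12}+(-1)^{i_0+i_1+i_2}\theta_{012}\big)$, and equivalently $$E[\varphi_0(N)\varphi_1(X_1)\varphi_2(X_2)]=E[\varphi_0(N)]E[\varphi_1(X)]E[\varphi_2(X)]+\frac{\theta_{01}}{4}\Delta(F_N;\varphi_0)\Big(E[\varphi_1(X_{[2]})]E[\varphi_2(X_{[2]})]-E[\varphi_1(X_{[1]})]E[\varphi_2(X_{[1]})]\Big)$$ $$\qquad+\frac{\theta_{12}}{4}E[\varphi_0(N)]\Delta(F_X;\varphi_1)\Delta(F_X;\varphi_2)-\frac{\theta_{012}}{8}\Delta(F_N;\varphi_0)\Delta(F_X;\varphi_1)\Delta(F_X;\varphi_2).$$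 If moreover $E[\varphi_0(N)]>0$, then $\frac{E[\varphi_0(N)\varphi_1(X_1)\varphi_2(X_2)]}{E[\varphi_0(N)]}$ equals $$E[\varphi_1(X)]E[\varphi_2(X)]+\frac{\theta_{01}}{4}\frac{\Delta(F_N;\varphi_0)}{E[\varphi_0(N)]}\Big(E[\varphi_1(X_{[2]})]E[\varphi_2(X_{[2]})]-E[\varphi_1(X_{[1]})]E[\varphi_2(X_{[1]})]\Big)+\frac{\theta_{12}}{4}\Delta(F_X;\varphi_1)\Delta(F_X;\varphi_2)-\frac{\theta_{012}}{8}\frac{\Delta(F_N;\varphi_0)}{E[\varphi_0(N)]}\Delta(F_X;\varphi_1)\Delta(F_X;\varphi_2).$$
   Context: Collective risk model (CRM): $N$ is a random variable with values in $\mathbb{N}_0$, cdf $F_N$, pmf $\gamma_N(n)=\Pr(N=n)$ and support $A_N=\{n:\gamma_N(n)>0\}$; $\underline X=\{X_j\}_{j\ge1}$ is a sequence of identically distributed strictly positive random variables with common cdf $F_X$ (generic copy $X$). A $d$-variate FGM copula with parameters $\theta_{j_1\dots j_k}$ is $C(u_1,\dots,u_d)=\prod_{m=1}^d u_m\big(1+\sum_{k=2}^d\sum_{j_1<\dots<j_k}\theta_{j_1\dots j_k}\bar u_{j_1}\cdots\bar u_{j_k}\big)$, $\bar u=1-u$, with parameters such that $1+\sum_{k}\sum_{j_1<\dots<j_k}\theta_{j_1\dots j_k}\varepsilon_{j_1}\cdots\varepsilon_{j_k}\ge0$ for all $\varepsilon\in\{-1,1\}^d$. A CRM belongs to $\aleph^{FGM}$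 if for every $k\in\mathbb{N}_1$, $k\le\sup A_N$, $F_{N,X_1,\dots,X_k}(n,x_1,\dots,x_k)=C_k(F_N(n),F_X(x_1),\dots,F_X(x_k))$ for a $(k+1)$-variate FGM copula $C_k$ with coordinates indexed $0,\dots,k$ (index $0$ for $N$). It belongs to $\aleph^{FGM*}$ if in addition $(N,X_1,\dots,X_k)\overset d=(N,X_{\pi(1)},\dots,X_{\pi(k)})$ for all such $k$ and all permutations $\pi$ of $\{1,\dots,k\}$; then the FGM parameters satisfy $\theta_{0j}=\theta_{01}$, $\theta_{ij}=\theta_{12}$ and $\theta_{0ij}=\theta_{012}$ for all $1\le i<j$. For a random variable $Y$, $Y_{[1]}$ and $Y_{[2]}$ denote the minimum and maximum of two iid copies of $Y$. *)

theory Defs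
  imports "HOL-Probability.Probability" "HOL-Combinatorics.Permutations"
begin

definition fgm_index_sets :: "nat \<Rightarrow> nat set set" where
  "fgm_index_sets d = {S. S \<subseteq> {..<d} \<and> 2 \<le> card S}"

definition fgm_valid :: "nat \<Rightarrow> (nat set \<Rightarrow> real) \<Rightarrow> bool" where
  "fgm_valid d \<theta> \<longleftrightarrow>
     (\<forall>\<epsilon>::nat \<Rightarrow> real. (\<forall>j<d. \<epsilon> j = 1 \<or> \<epsilon> j = -1) \<longrightarrow>
        0 \<le> 1 + (\<Sum>S\<in>fgm_index_sets d. \<theta> S * (\<Prod>j\<in>S. \<epsilon> j)))"

definition fgm_copula :: "nat \<Rightarrow> (nat set \<Rightarrow> real) \<Rightarrow> (nat \<Rightarrow> real) \<Rightarrow> real" where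
  "fgm_copula d \<theta> u =
     (\<Prod>m<d. u m) * (1 + (\<Sum>S\<in>fgm_index_sets d. \<theta> S * (\<Prod>j\<in>S. 1 - u j)))"

text \<open>N and X are random variables on the probability space M; only X j for j \<ge> 1 matter.\<close>

definition crm :: "'a measure \<Rightarrow> ('a \<Rightarrow> nat) \<Rightarrow> (nat \<Rightarrow> 'a \<Rightarrow> real) \<Rightarrow> bool" where
  "crm M N X \<longleftrightarrow> prob_space M \<and>
     N \<in> measurable M (count_space UNIV) \<and>
     (\<forall>j\<ge>1. X j \<in> borel_measurable M) \<and>
     (\<forall>j\<ge>1. \<forall>\<omega>\<in>space M. X j \<omega> > 0) \<and>
     (\<forall>j\<ge>1. distr M borel (X j) = distr M borel (X 1))"

definition cdf_N :: "'a measure \<Rightarrow> ('a \<Rightarrow> nat) \<Rightarrow> nat \<Rightarrow> real" where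
  "cdf_N M N n = measure M {\<omega>\<in>space M. N \<omega> \<le> n}"

definition cdf_X :: "'a measure \<Rightarrow> (nat \<Rightarrow> 'a \<Rightarrow> real) \<Rightarrow> real \<Rightarrow> real" where
  "cdf_X M X x = measure M {\<omega>\<in>space M. X 1 \<omega> \<le> x}"

definition support_N :: "'a measure \<Rightarrow> ('a \<Rightarrow> nat) \<Rightarrow> nat set" where
  "support_N M N = {n. measure M {\<omega>\<in>space M. N \<omega> = n} > 0}"

text \<open>For k :: nat and A a set of naturals, k \<le> sup A iff some element of A is \<ge> k.\<close>
definition le_sup_support :: "nat \<Rightarrow> 'a measure \<Rightarrow> ('a \<Rightarrow> nat) \<Rightarrow> bool" where
  "le_sup_support k M N \<longleftrightarrow> (\<exists>n\<in>support_N M N. k \<le> n)"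

definition joint_cdf :: "'a measure \<Rightarrow> ('a \<Rightarrow> nat) \<Rightarrow> (nat \<Rightarrow> 'a \<Rightarrow> real) \<Rightarrow> nat
    \<Rightarrow> nat \<Rightarrow> (nat \<Rightarrow> real) \<Rightarrow> real" where
  "joint_cdf M N X k n x =
     measure M {\<omega>\<in>space M. N \<omega> \<le> n \<and> (\<forall>j\<in>{1..k}. X j \<omega> \<le> x j)}"

text \<open>Membership in aleph^FGM, witnessed by the family theta: theta k is the
 parameter family of the (k+1)-variate FGM copula C_k (index 0 for N).\<close>
definition crm_FGM :: "'a measure \<Rightarrow> ('a \<Rightarrow> nat) \<Rightarrow> (nat \<Rightarrow> 'a \<Rightarrow> real)
    \<Rightarrow> (nat \<Rightarrow> nat set \<Rightarrow> real) \<Rightarrow> bool" where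
  "crm_FGM M N X \<theta> \<longleftrightarrow> crm M N X \<and>
     (\<forall>k\<ge>1. le_sup_support k M N \<longrightarrow>
        fgm_valid (Suc k) (\<theta> k) \<and>
        (\<forall>n x. joint_cdf M N X k n x =
            fgm_copula (Suc k) (\<theta> k) (\<lambda>m. if m = 0 then cdf_N M N n else cdf_X M X (x m))))"

definition crm_FGM_star :: "'a measure \<Rightarrow> ('a \<Rightarrow> nat) \<Rightarrow> (nat \<Rightarrow> 'a \<Rightarrow> real)
    \<Rightarrow> (nat \<Rightarrow> nat set \<Rightarrow> real) \<Rightarrow> bool" where
  "crm_FGM_star M N X \<theta> \<longleftrightarrow> crm_FGM M N X \<theta> \<and>
     (\<forall>k\<ge>1. le_sup_support k M N \<longrightarrow>
        (\<forall>\<pi>. \<pi> permutes {1..k} \<longrightarrow>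
           distr M (count_space UNIV \<Otimes>\<^sub>M (\<Pi>\<^sub>M j\<in>{1..k}. borel))
              (\<lambda>\<omega>. (N \<omega>, \<lambda>j\<in>{1..k}. X (\<pi> j) \<omega>))
         = distr M (count_space UNIV \<Otimes>\<^sub>M (\<Pi>\<^sub>M j\<in>{1..k}. borel))
              (\<lambda>\<omega>. (N \<omega>, \<lambda>j\<in>{1..k}. X j \<omega>))))"

text \<open>For a distribution D of Y, E[phi(Y_[1])] and E[phi(Y_[2])] where Y_[1], Y_[2]
 are min and max of two iid copies of Y.\<close>
definition exp_os :: "'b::linorder measure \<Rightarrow> nat \<Rightarrow> ('b \<Rightarrow> real) \<Rightarrow> real" where
  "exp_os D i \<phi> = (if i = 1 then (\<integral>z. \<phi> (min (fst z) (snd z)) \<partial>(D \<Otimes>\<^sub>M D))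
                    else (\<integral>z. \<phi> (max (fst z) (snd z)) \<partial>(D \<Otimes>\<^sub>M D)))"

definition integrable_os :: "'b::linorder measure \<Rightarrow> ('b \<Rightarrow> real) \<Rightarrow> bool" where
  "integrable_os D \<phi> \<longleftrightarrow> integrable (D \<Otimes>\<^sub>M D) (\<lambda>z. \<phi> (min (fst z) (snd z))) \<and>
                          integrable (D \<Otimes>\<^sub>M D) (\<lambda>z. \<phi> (max (fst z) (snd z)))"

definition Delta :: "'b::linorder measure \<Rightarrow> ('b \<Rightarrow> real) \<Rightarrow> real" where
  "Delta D \<phi> = exp_os D 2 \<phi> - exp_os D 1 \<phi>"

end

theory Submission
  imports Defs
begin

text \<open>
  Let G0(u) = 1 - (1 - u)^2 and G1(u) = u^2 be the distribution functions of the minimum and the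
  maximum of two iid copies of a variable with distribution function u. Since G0 + G1 = 2u and
  G0 - G1 = 2u(1 - u), the trivariate FGM copula is the mixture of the products
  G(i0)(u0) G(i1)(u1) G(i2)(u2) over (i0, i1, i2) in {0,1}^3, with weights f(i0, i1, i2) that
  are nonnegative precisely because the copula is valid. Hence the law of (N, X1, X2) is a finite
  mixture of products of laws of order statistics, and the expectation factorises termwise.
  The weights obtained this way carry \<theta>02 where the theorem has \<theta>01. Exchangeability of
  X1 and X2 jointly with N gives E[\<phi>0(N) \<phi>2(X2)] = E[\<phi>0(N) \<phi>2(X1)], which by the same formula
  says (\<theta>02 - \<theta>01) \<Delta>(F_N; \<phi>0) \<Delta>(F_X; \<phi>2) = 0; this is exactly what is needed to replace
  \<theta>02 by \<theta>01. The second form expands the weights using E \<phi>(Y) = (E \<phi>(Y[1]) + E \<phi>(Y[2])) / 2.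
\<close>

section \<open>Products and finite mixtures of probability measures\<close>

lemma (in pair_sigma_finite) has_bochner_integral_mult_fst_snd:
  fixes f :: "'a \<Rightarrow> real" and g :: "'b \<Rightarrow> real"
  assumes f: "integrable M1 f" and g: "integrable M2 g"
  shows "has_bochner_integral (M1 \<Otimes>\<^sub>M M2) (\<lambda>z. f (fst z) * g (snd z)) (integral\<^sup>L M1 f * integral\<^sup>L M2 g)"
proof -
  have [measurable]: "f \<in> borel_measurable M1" "g \<in> borel_measurable M2"
    using f g by auto
  have int: "integrable (M1 \<Otimes>\<^sub>M M2) (\<lambda>z. f (fst z) * g (snd z))"
  proof (rule Fubini_integrable)
    show "integrable M1 (\<lambda>x. \<integral>y. norm (f (fst (x, y)) * g (snd (x, y))) \<partial>M2)"
      using f by (simp add: abs_mult)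
  qed (use g in simp_all)
  then show ?thesis
    using integral_fst'[OF int] by (simp add: has_bochner_integral_iff)
qed

lemma (in sigma_finite_measure) measure_pair_measure_Times:
  "A \<in> sets N \<Longrightarrow> B \<in> sets M \<Longrightarrow> measure (N \<Otimes>\<^sub>M M) (A \<times> B) = measure N A * measure M B"
  by (simp add: measure_def emeasure_pair_measure_Times enn2real_mult)

lemma measure_eqI_atMost:
  fixes P Q :: "'a::ordered_euclidean_space measure"
  assumes sets: "sets P = sets borel" "sets Q = sets borel" and fin: "finite_measure P"
    and eq: "\<And>x. emeasure P {..x} = emeasure Q {..x}"
  shows "P = Q"
proof (rule measure_eqI_generator_eq[where \<Omega>=UNIV and E="range atMost" and A="\<lambda>k. {..real k *\<^sub>R One}"])
  show "Int_stable (range atMost :: 'a set set)"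
  proof -
    have "{..a} \<inter> {..b} = {..inf a b}" for a b :: 'a by auto
    then show ?thesis by (auto simp: Int_stable_def)
  qed
  have "sets (borel :: 'a measure) = sigma_sets UNIV (range atMost)"
    by (subst borel_eq_atMost) (simp add: sets_measure_of)
  then show "sets P = sigma_sets UNIV (range atMost)" "sets Q = sigma_sets UNIV (range atMost)"
    using sets by simp_all
  show "(\<Union>k. {..real k *\<^sub>R One}) = (UNIV :: 'a set)"
  proof (intro set_eqI iffI UNIV_I)
    fix x :: 'a
    obtain k :: nat where "norm x \<le> real k" using real_arch_simple by blast
    then have "x \<le> real k *\<^sub>R One"
      by (auto simp: eucl_le[where 'a='a] dest!: Basis_le_norm[of _ x] abs_le_D1)
    then show "x \<in> (\<Union>k. {..real k *\<^sub>R One})" by blast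
  qed
  show "emeasure P {..real k *\<^sub>R One} \<noteq> \<infinity>" for k
    using fin by (simp add: finite_measure.emeasure_finite)
qed (use eq in auto)

definition mixture :: "'i set \<Rightarrow> ('i \<Rightarrow> real) \<Rightarrow> ('i \<Rightarrow> 'b measure) \<Rightarrow> 'b measure" where
  "mixture I w K = density (count_space I) (\<lambda>i. ennreal (w i)) \<bind> K"

context
  fixes I :: "'i set" and w :: "'i \<Rightarrow> real" and K :: "'i \<Rightarrow> 'b measure" and S :: "'b measure"
  assumes finite_I: "finite I" and I_nonempty: "I \<noteq> {}"
    and prob_K: "\<And>i. i \<in> I \<Longrightarrow> prob_space (K i)"
    and sets_K: "\<And>i. i \<in> I \<Longrightarrow> sets (K i) = sets S"
    and w_nonneg: "\<And>i. i \<in> I \<Longrightarrow> 0 \<le> w i"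
begin

lemma
  shows sets_mixture: "sets (mixture I w K) = sets S"
    and emeasure_mixture:
      "A \<in> sets S \<Longrightarrow> emeasure (mixture I w K) A = (\<Sum>i\<in>I. ennreal (w i) * emeasure (K i) A)"
    and nn_integral_mixture: "h \<in> borel_measurable S \<Longrightarrow>
      (\<integral>\<^sup>+x. h x \<partial>mixture I w K) = (\<Sum>i\<in>I. ennreal (w i) * (\<integral>\<^sup>+x. h x \<partial>K i))"
proof -
  let ?W = "density (count_space I) (\<lambda>i. ennreal (w i))"
  have K: "K \<in> measurable ?W (subprob_algebra S)"
    unfolding measurable_cong_sets[OF sets_density refl] measurable_count_space_eq1
    using prob_K sets_K by (auto simp: space_subprob_algebra intro: prob_space_imp_subprob_space)
  have W: "space ?W \<noteq> {}"
    using I_nonempty by simp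
  show "sets (mixture I w K) = sets S"
    unfolding mixture_def by (rule sets_bind) (use sets_K W in auto)
  show "A \<in> sets S \<Longrightarrow> emeasure (mixture I w K) A = (\<Sum>i\<in>I. ennreal (w i) * emeasure (K i) A)"
    unfolding mixture_def
    by (simp add: emeasure_bind[OF W K] nn_integral_density nn_integral_count_space_finite[OF finite_I])
  show "h \<in> borel_measurable S \<Longrightarrow>
      (\<integral>\<^sup>+x. h x \<partial>mixture I w K) = (\<Sum>i\<in>I. ennreal (w i) * (\<integral>\<^sup>+x. h x \<partial>K i))"
    unfolding mixture_def
    by (simp add: nn_integral_bind[OF _ K] nn_integral_density nn_integral_count_space_finite[OF finite_I])
qed

lemma has_bochner_integral_mixture_nonneg:
  fixes h :: "'b \<Rightarrow> real"
  assumes int: "\<And>i. i \<in> I \<Longrightarrow> integrable (K i) h" and nonneg: "\<And>x. 0 \<le> h x"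
  shows "has_bochner_integral (mixture I w K) h (\<Sum>i\<in>I. w i * integral\<^sup>L (K i) h)"
proof (rule has_bochner_integral_nn_integral)
  obtain i0 where "i0 \<in> I"
    using I_nonempty by auto
  then show h: "h \<in> borel_measurable (mixture I w K)"
    using int[of i0] sets_K[of i0] by (simp add: measurable_cong_sets[OF sets_mixture refl])
  have "(\<integral>\<^sup>+x. ennreal (h x) \<partial>mixture I w K) = (\<Sum>i\<in>I. ennreal (w i) * ennreal (integral\<^sup>L (K i) h))"
    using h int nonneg
    by (simp add: nn_integral_mixture measurable_cong_sets[OF sets_mixture refl] nn_integral_eq_integral)
  also have "\<dots> = ennreal (\<Sum>i\<in>I. w i * integral\<^sup>L (K i) h)"
    by (simp add: sum_ennreal[symmetric] ennreal_mult w_nonneg int nonneg integral_nonneg)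
  finally show "(\<integral>\<^sup>+x. ennreal (h x) \<partial>mixture I w K) = ennreal (\<Sum>i\<in>I. w i * integral\<^sup>L (K i) h)" .
qed (auto simp: w_nonneg nonneg integral_nonneg intro!: sum_nonneg)

lemma has_bochner_integral_mixture:
  fixes g :: "'b \<Rightarrow> real"
  assumes int: "\<And>i. i \<in> I \<Longrightarrow> integrable (K i) g"
  shows "has_bochner_integral (mixture I w K) g (\<Sum>i\<in>I. w i * integral\<^sup>L (K i) g)"
proof -
  have "has_bochner_integral (mixture I w K) (\<lambda>x. max (g x) 0 - max (- g x) 0)
      ((\<Sum>i\<in>I. w i * integral\<^sup>L (K i) (\<lambda>x. max (g x) 0)) - (\<Sum>i\<in>I. w i * integral\<^sup>L (K i) (\<lambda>x. max (- g x) 0)))"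
    using int by (intro has_bochner_integral_diff has_bochner_integral_mixture_nonneg) auto
  moreover have split: "max (g x) 0 - max (- g x) 0 = g x" for x
    by auto
  moreover have "integral\<^sup>L (K i) g = integral\<^sup>L (K i) (\<lambda>x. max (g x) 0) - integral\<^sup>L (K i) (\<lambda>x. max (- g x) 0)"
    if "i \<in> I" for i
    using Bochner_Integration.integral_diff[of "K i" "\<lambda>x. max (g x) 0" "\<lambda>x. max (- g x) 0"] int[OF that]
    by (simp add: split integrable_max)
  ultimately show ?thesis
    by (simp add: sum_subtractf[symmetric] right_diff_distrib)
qed

end

lemma measure_pair_measure3_atMost:
  fixes A B C :: "real measure"
  assumes "prob_space A" "prob_space B" "prob_space C"
    and "sets A = sets borel" "sets B = sets borel" "sets C = sets borel"
  shows "measure (A \<Otimes>\<^sub>M (B \<Otimes>\<^sub>M C)) {..(t, x, y)} = measure A {..t} * (measure B {..x} * measure C {..y})"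
proof -
  interpret B: prob_space B by fact
  interpret C: prob_space C by fact
  interpret BC: prob_space "B \<Otimes>\<^sub>M C" using assms by (intro prob_space_pair)
  have "{..(t, x, y)} = {..t} \<times> ({..x} \<times> {..y})"
    by (auto simp: less_eq_prod_def)
  then show ?thesis
    using assms by (simp add: BC.measure_pair_measure_Times C.measure_pair_measure_Times)
qed

lemma has_bochner_integral_pair_measure3:
  fixes f :: "'a \<Rightarrow> real" and g :: "'b \<Rightarrow> real" and h :: "'c \<Rightarrow> real"
  assumes "prob_space A" "prob_space B" "prob_space C"
    and f: "integrable A f" and g: "integrable B g" and h: "integrable C h"
  shows "has_bochner_integral (A \<Otimes>\<^sub>M (B \<Otimes>\<^sub>M C)) (\<lambda>(t, x, y). f t * (g x * h y))
    (integral\<^sup>L A f * (integral\<^sup>L B g * integral\<^sup>L C h))"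
proof -
  interpret A: prob_space A by fact
  interpret B: prob_space B by fact
  interpret C: prob_space C by fact
  interpret BC: pair_prob_space B C ..
  interpret ABC: pair_prob_space A "B \<Otimes>\<^sub>M C" ..
  have gh: "has_bochner_integral (B \<Otimes>\<^sub>M C) (\<lambda>z. g (fst z) * h (snd z)) (integral\<^sup>L B g * integral\<^sup>L C h)"
    using g h by (rule BC.has_bochner_integral_mult_fst_snd)
  then have "has_bochner_integral (A \<Otimes>\<^sub>M (B \<Otimes>\<^sub>M C)) (\<lambda>z. f (fst z) * (g (fst (snd z)) * h (snd (snd z))))
      (integral\<^sup>L A f * integral\<^sup>L (B \<Otimes>\<^sub>M C) (\<lambda>z. g (fst z) * h (snd z)))"
    using f by (intro ABC.has_bochner_integral_mult_fst_snd[where g="\<lambda>z. g (fst z) * h (snd z)"])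
      (auto simp: has_bochner_integral_iff)
  then show ?thesis
    using gh by (simp add: split_beta' has_bochner_integral_iff)
qed

lemma has_bochner_integral_cdf_product_mixture:
  fixes P :: "(real \<times> real \<times> real) measure" and A B C :: "'i \<Rightarrow> real measure"
    and f g h :: "real \<Rightarrow> real"
  assumes cdf: "\<And>t x y. measure P {..(t, x, y)} =
      (\<Sum>i\<in>I. w i * (measure (A i) {..t} * (measure (B i) {..x} * measure (C i) {..y})))"
    and I: "finite I" "I \<noteq> {}" and w: "\<And>i. i \<in> I \<Longrightarrow> 0 \<le> w i"
    and P: "prob_space P" "sets P = sets borel"
    and A: "\<And>i. i \<in> I \<Longrightarrow> prob_space (A i)" "\<And>i. i \<in> I \<Longrightarrow> sets (A i) = sets borel"
    and B: "\<And>i. i \<in> I \<Longrightarrow> prob_space (B i)" "\<And>i. i \<in> I \<Longrightarrow> sets (B i) = sets borel"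
    and C: "\<And>i. i \<in> I \<Longrightarrow> prob_space (C i)" "\<And>i. i \<in> I \<Longrightarrow> sets (C i) = sets borel"
    and int: "\<And>i. i \<in> I \<Longrightarrow> integrable (A i) f" "\<And>i. i \<in> I \<Longrightarrow> integrable (B i) g"
      "\<And>i. i \<in> I \<Longrightarrow> integrable (C i) h"
  shows "has_bochner_integral P (\<lambda>(t, x, y). f t * (g x * h y))
    (\<Sum>i\<in>I. w i * (integral\<^sup>L (A i) f * (integral\<^sup>L (B i) g * integral\<^sup>L (C i) h)))"
proof -
  define K where "K i = A i \<Otimes>\<^sub>M (B i \<Otimes>\<^sub>M C i)" for i
  have prob_K: "prob_space (K i)" if "i \<in> I" for i
    unfolding K_def using A B C that by (intro prob_space_pair) auto
  have sets_K: "sets (K i) = sets (borel :: (real \<times> real \<times> real) measure)" if "i \<in> I" for i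
    unfolding K_def borel_prod[symmetric] using A B C that by (intro sets_pair_measure_cong) auto
  have "P = mixture I w K"
  proof (rule measure_eqI_atMost)
    fix z :: "real \<times> real \<times> real"
    obtain t x y where z: "z = (t, x, y)" by (cases z)
    have "emeasure (K i) {..z} = ennreal (measure (K i) {..z})" if "i \<in> I" for i
      using prob_K[OF that] unfolding prob_space_def by (blast intro: finite_measure.emeasure_eq_measure)
    then have "emeasure (mixture I w K) {..z} = (\<Sum>i\<in>I. ennreal (w i) * ennreal (measure (K i) {..z}))"
      by (simp add: emeasure_mixture[OF I prob_K sets_K w])
    also have "\<dots> = ennreal (measure P {..z})"
      unfolding z cdf K_def using w A B C
      by (simp add: sum_ennreal[symmetric] ennreal_mult measure_pair_measure3_atMost)
    finally show "emeasure P {..z} = emeasure (mixture I w K) {..z}"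
      using P(1) unfolding prob_space_def by (simp add: finite_measure.emeasure_eq_measure)
  qed (use P sets_mixture[OF I prob_K sets_K w] in \<open>auto simp: prob_space_def\<close>)
  moreover have "has_bochner_integral (K i) (\<lambda>(t, x, y). f t * (g x * h y))
      (integral\<^sup>L (A i) f * (integral\<^sup>L (B i) g * integral\<^sup>L (C i) h))" if "i \<in> I" for i
    unfolding K_def using A B C int that by (intro has_bochner_integral_pair_measure3) auto
  ultimately show ?thesis
    using has_bochner_integral_mixture[OF I prob_K sets_K w, where g="\<lambda>(t, x, y). f t * (g x * h y)"]
    by (simp add: has_bochner_integral_iff)
qed

section \<open>Order statistics of two iid copies\<close>

text \<open>Index j = 0 is the minimum and j = 1 the maximum, whereas \<open>exp_os\<close> counts from 1:
  \<open>order_stat j\<close> belongs to \<open>exp_os D (1 + j)\<close>.\<close>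

definition order_stat :: "nat \<Rightarrow> 'b::linorder \<times> 'b \<Rightarrow> 'b" where
  "order_stat j z = (if j = 0 then min (fst z) (snd z) else max (fst z) (snd z))"

definition order_stat_cdf :: "nat \<Rightarrow> real \<Rightarrow> real" where
  "order_stat_cdf j u = (if j = 0 then 1 - (1 - u)\<^sup>2 else u\<^sup>2)"

lemma exp_os_eq_integral_order_stat:
  "exp_os D (1 + j) \<phi> = (\<integral>z. \<phi> (order_stat j z) \<partial>(D \<Otimes>\<^sub>M D))"
  by (simp add: exp_os_def order_stat_def)

lemma integrable_order_stat:
  "integrable_os D \<phi> \<Longrightarrow> integrable (D \<Otimes>\<^sub>M D) (\<lambda>z. \<phi> (order_stat j z))"
  by (cases "j = 0") (simp_all add: integrable_os_def order_stat_def)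

lemma order_stat_le_iff:
  fixes f :: "'b::linorder \<Rightarrow> 'c::linorder"
  assumes "mono f"
  shows "f (order_stat j z) \<le> t \<longleftrightarrow>
    (if j = 0 then f (fst z) \<le> t \<or> f (snd z) \<le> t else f (fst z) \<le> t \<and> f (snd z) \<le> t)"
  using monoD[OF assms, of "fst z" "snd z"] monoD[OF assms, of "snd z" "fst z"]
  by (cases "fst z \<le> snd z") (auto simp: order_stat_def min_def max_def not_le dest: less_imp_le)

context
  fixes D :: "'b::linorder measure" and f :: "'b \<Rightarrow> real" and t :: real
  assumes mono_f: "mono f" and f_measurable: "f \<in> borel_measurable D"
begin

lemma order_stat_le_set:
  defines "S \<equiv> {v \<in> space D. f v \<le> t}"
  shows "{z \<in> space (D \<Otimes>\<^sub>M D). f (order_stat j z) \<le> t} =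
    (if j = 0 then space (D \<Otimes>\<^sub>M D) - (space D - S) \<times> (space D - S) else S \<times> S)"
  by (auto simp: order_stat_le_iff[OF mono_f] S_def space_pair_measure)

lemma order_stat_le_set_measurable:
  "{z \<in> space (D \<Otimes>\<^sub>M D). f (order_stat j z) \<le> t} \<in> sets (D \<Otimes>\<^sub>M D)"
proof -
  have "{v \<in> space D. f v \<le> t} \<in> sets D"
    using f_measurable by measurable
  then show ?thesis
    unfolding order_stat_le_set by auto
qed

lemma measure_order_stat_le:
  assumes "prob_space D"
  shows "measure (D \<Otimes>\<^sub>M D) {z \<in> space (D \<Otimes>\<^sub>M D). f (order_stat j z) \<le> t} =
    order_stat_cdf j (measure D {v \<in> space D. f v \<le> t})"
proof -
  interpret D: prob_space D by fact
  interpret DD: pair_prob_space D D ..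
  define S where "S = {v \<in> space D. f v \<le> t}"
  have S: "S \<in> sets D"
    unfolding S_def using f_measurable by measurable
  have "measure D (space D - S) = 1 - measure D S"
    using S by (rule D.prob_compl)
  with S show ?thesis
    unfolding order_stat_le_set S_def[symmetric]
    by (simp add: DD.prob_compl D.measure_pair_measure_Times order_stat_cdf_def power2_eq_square)
qed

end

lemma borel_measurable_order_stat:
  fixes f :: "'b::linorder \<Rightarrow> real"
  assumes "mono f" "f \<in> borel_measurable D"
  shows "(\<lambda>z. f (order_stat j z)) \<in> borel_measurable (D \<Otimes>\<^sub>M D)"
  using order_stat_le_set_measurable[OF assms] by (simp add: borel_measurable_iff_le)

text \<open>The law of f(Y[1+j]) for Y distributed as D; f = real transports the counting variable N
  to the real line, so that (N, X1, X2) becomes a random vector in \<real>^3.\<close>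

definition order_stat_law :: "'b::linorder measure \<Rightarrow> ('b \<Rightarrow> real) \<Rightarrow> nat \<Rightarrow> real measure" where
  "order_stat_law D f j = distr (D \<Otimes>\<^sub>M D) borel (\<lambda>z. f (order_stat j z))"

context
  fixes D :: "'b::linorder measure" and f :: "'b \<Rightarrow> real"
  assumes prob_D: "prob_space D" and mono_f: "mono f" and f_measurable: "f \<in> borel_measurable D"
begin

lemma prob_space_order_stat_law: "prob_space (order_stat_law D f j)"
  and sets_order_stat_law: "sets (order_stat_law D f j) = sets borel"
  unfolding order_stat_law_def
  using borel_measurable_order_stat[OF mono_f f_measurable] prob_space_pair[OF prob_D prob_D]
  by (simp_all add: prob_space.prob_space_distr)

lemma measure_order_stat_law_atMost:
  "measure (order_stat_law D f j) {..t} = order_stat_cdf j (measure D {v \<in> space D. f v \<le> t})"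
proof -
  have "measure (order_stat_law D f j) {..t} =
      measure (D \<Otimes>\<^sub>M D) {z \<in> space (D \<Otimes>\<^sub>M D). f (order_stat j z) \<le> t}"
    unfolding order_stat_law_def using borel_measurable_order_stat[OF mono_f f_measurable]
    by (subst measure_distr) (auto intro!: arg_cong2[where f=measure])
  then show ?thesis
    using measure_order_stat_le[OF mono_f f_measurable prob_D] by simp
qed

lemma has_bochner_integral_order_stat_law:
  assumes \<psi>: "\<psi> \<in> borel_measurable borel"
    and \<psi>_f: "\<And>v. v \<in> space D \<Longrightarrow> \<psi> (f v) = \<phi> v" and int: "integrable_os D \<phi>"
  shows "has_bochner_integral (order_stat_law D f j) \<psi> (exp_os D (1 + j) \<phi>)"
proof -
  have "order_stat j z \<in> space D" if "z \<in> space (D \<Otimes>\<^sub>M D)" for z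
    using that by (auto simp: order_stat_def space_pair_measure min_def max_def)
  then have eq: "\<psi> (f (order_stat j z)) = \<phi> (order_stat j z)" if "z \<in> space (D \<Otimes>\<^sub>M D)" for z
    using that \<psi>_f by blast
  have "integrable (D \<Otimes>\<^sub>M D) (\<lambda>z. \<psi> (f (order_stat j z)))"
    by (rule Bochner_Integration.integrable_cong[THEN iffD2, OF refl])
      (auto simp: eq intro: integrable_order_stat[OF int])
  moreover have "(\<integral>z. \<psi> (f (order_stat j z)) \<partial>(D \<Otimes>\<^sub>M D)) = exp_os D (1 + j) \<phi>"
    unfolding exp_os_eq_integral_order_stat by (rule Bochner_Integration.integral_cong) (auto simp: eq)
  ultimately show ?thesis
    using borel_measurable_order_stat[OF mono_f f_measurable] \<psi>
    by (simp add: order_stat_law_def has_bochner_integral_iff integrable_distr_eq integral_distr)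
qed

end

lemma exp_os_1_add_exp_os_2:
  assumes D: "prob_space D" and int: "integrable D \<phi>" and int_os: "integrable_os D \<phi>"
  shows "exp_os D 1 \<phi> + exp_os D 2 \<phi> = 2 * integral\<^sup>L D \<phi>"
proof -
  interpret D: prob_space D by fact
  interpret DD: pair_prob_space D D ..
  have fst: "has_bochner_integral (D \<Otimes>\<^sub>M D) (\<lambda>z. \<phi> (fst z) * 1) (integral\<^sup>L D \<phi> * 1)"
    and snd: "has_bochner_integral (D \<Otimes>\<^sub>M D) (\<lambda>z. 1 * \<phi> (snd z)) (1 * integral\<^sup>L D \<phi>)"
    using DD.has_bochner_integral_mult_fst_snd[of \<phi> "\<lambda>_. 1"] DD.has_bochner_integral_mult_fst_snd[of "\<lambda>_. 1" \<phi>]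
      int by (simp_all add: D.prob_space)
  have "exp_os D 1 \<phi> + exp_os D 2 \<phi> = (\<integral>z. \<phi> (min (fst z) (snd z)) + \<phi> (max (fst z) (snd z)) \<partial>(D \<Otimes>\<^sub>M D))"
    using int_os by (simp add: exp_os_def integrable_os_def)
  also have "\<dots> = (\<integral>z. \<phi> (fst z) * 1 + 1 * \<phi> (snd z) \<partial>(D \<Otimes>\<^sub>M D))"
    by (rule Bochner_Integration.integral_cong) (auto simp: min_def max_def)
  also have "\<dots> = 2 * integral\<^sup>L D \<phi>"
    using has_bochner_integral_add[OF fst snd] by (simp add: has_bochner_integral_iff)
  finally show ?thesis .
qed

lemma borel_measurable_integrable_os:
  fixes \<phi> :: "real \<Rightarrow> real"
  assumes "integrable_os D \<phi>" and sets_D: "sets D = sets borel"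
  shows "\<phi> \<in> borel_measurable borel"
proof -
  have "(\<lambda>z. \<phi> (min (fst z) (snd z))) \<in> borel_measurable (borel \<Otimes>\<^sub>M borel)"
    using assms(1) measurable_cong_sets[OF sets_pair_measure_cong[OF sets_D sets_D] refl]
    by (auto simp: integrable_os_def)
  then have "(\<lambda>x. \<phi> (min (fst (x, x)) (snd (x, x)))) \<in> borel_measurable borel"
    by (rule measurable_compose[rotated]) simp
  then show ?thesis by simp
qed

lemma integral_eq_mean_exp_os:
  assumes "prob_space M" "Y \<in> M \<rightarrow>\<^sub>M S" "\<phi> \<in> borel_measurable S"
    and "integrable M (\<lambda>\<omega>. \<phi> (Y \<omega>))" and "integrable_os (distr M S Y) \<phi>"
  shows "(\<integral>\<omega>. \<phi> (Y \<omega>) \<partial>M) = (exp_os (distr M S Y) 1 \<phi> + exp_os (distr M S Y) 2 \<phi>) / 2"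
  using exp_os_1_add_exp_os_2[of "distr M S Y" \<phi>] assms
  by (simp add: prob_space.prob_space_distr integrable_distr_eq integral_distr)

section \<open>The mixture weights of the trivariate FGM copula\<close>

text \<open>The probability mass function f_{I0,I1,I2} of the paper, with \<theta>02 kept as a separate
  parameter.\<close>

definition fgm3_weight :: "real \<Rightarrow> real \<Rightarrow> real \<Rightarrow> real \<Rightarrow> nat \<Rightarrow> nat \<Rightarrow> nat \<Rightarrow> real" where
  "fgm3_weight t01 t02 t12 t012 i0 i1 i2 =
     (1/8) * (1 + (-1)^(i0+i1) * t01 + (-1)^(i0+i2) * t02 + (-1)^(i1+i2) * t12 + (-1)^(i0+i1+i2) * t012)"

lemma sum_fgm3_weight:
  fixes a b c :: "nat \<Rightarrow> real"
  shows "(\<Sum>i0\<in>{0,1}. \<Sum>i1\<in>{0,1}. \<Sum>i2\<in>{0,1}.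
      fgm3_weight p q r s i0 i1 i2 * a (1+i0) * b (1+i1) * c (1+i2)) =
    (a 1 + a 2) / 2 * ((b 1 + b 2) / 2) * ((c 1 + c 2) / 2)
    + p / 4 * (a 2 - a 1) * (b 2 - b 1) * ((c 1 + c 2) / 2)
    + q / 4 * (a 2 - a 1) * ((b 1 + b 2) / 2) * (c 2 - c 1)
    + r / 4 * ((a 1 + a 2) / 2) * (b 2 - b 1) * (c 2 - c 1)
    - s / 8 * (a 2 - a 1) * (b 2 - b 1) * (c 2 - c 1)"
  by (simp add: fgm3_weight_def numeral_2_eq_2 field_simps)

lemma sum_fgm3_weight_eq_symmetric:
  fixes a b c :: "nat \<Rightarrow> real"
  assumes "(q - p) * (a 2 - a 1) * (c 2 - c 1) = 0"
  shows "(\<Sum>i0\<in>{0,1}. \<Sum>i1\<in>{0,1}. \<Sum>i2\<in>{0,1}.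
      fgm3_weight p q r s i0 i1 i2 * a (1+i0) * b (1+i1) * c (1+i2)) =
    (\<Sum>i0\<in>{0,1}. \<Sum>i1\<in>{0,1}. \<Sum>i2\<in>{0,1}.
      fgm3_weight p p r s i0 i1 i2 * a (1+i0) * b (1+i1) * c (1+i2))"
proof -
  have "(\<Sum>i0\<in>{0,1}. \<Sum>i1\<in>{0,1}. \<Sum>i2\<in>{0,1}.
      fgm3_weight p q r s i0 i1 i2 * a (1+i0) * b (1+i1) * c (1+i2)) -
    (\<Sum>i0\<in>{0,1}. \<Sum>i1\<in>{0,1}. \<Sum>i2\<in>{0,1}.
      fgm3_weight p p r s i0 i1 i2 * a (1+i0) * b (1+i1) * c (1+i2)) =
    (q - p) * (a 2 - a 1) * (c 2 - c 1) * ((b 1 + b 2) / 8)"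
    unfolding sum_fgm3_weight[where a=a and b=b and c=c] by (simp add: field_simps)
  then show ?thesis
    by (simp only: assms mult_zero_left right_minus_eq)
qed

lemma sum_fgm3_weight_symmetric:
  fixes a b c :: "nat \<Rightarrow> real"
  shows "(\<Sum>i0\<in>{0,1}. \<Sum>i1\<in>{0,1}. \<Sum>i2\<in>{0,1}.
      fgm3_weight p p r s i0 i1 i2 * a (1+i0) * b (1+i1) * c (1+i2)) =
    (a 1 + a 2) / 2 * ((b 1 + b 2) / 2) * ((c 1 + c 2) / 2)
    + p / 4 * (a 2 - a 1) * (b 2 * c 2 - b 1 * c 1)
    + r / 4 * ((a 1 + a 2) / 2) * (b 2 - b 1) * (c 2 - c 1)
    - s / 8 * (a 2 - a 1) * (b 2 - b 1) * (c 2 - c 1)"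
  unfolding sum_fgm3_weight[where a=a and b=b and c=c] by (simp add: field_simps)

lemma fgm_index_sets_3: "fgm_index_sets 3 = {{0,1}, {0,2}, {1,2}, {0,1,2}}"
proof -
  have "fgm_index_sets 3 = {S \<in> Pow {0,1,2}. 2 \<le> card S}"
    unfolding fgm_index_sets_def by (auto simp: numeral_3_eq_3 lessThan_Suc)
  also have "\<dots> = {{0,1}, {0,2}, {1,2}, {0,1,2}}"
    by (simp add: Pow_insert insert_commute) (auto simp: card_insert_if)
  finally show ?thesis .
qed

lemma sum_fgm_index_sets_3:
  "(\<Sum>S\<in>fgm_index_sets 3. f S) = f {0,1} + f {0,2} + f {1,2} + f {0,1,2}"
  unfolding fgm_index_sets_3 by (simp add: insert_eq_iff doubleton_eq_iff add.assoc)

lemma fgm3_weight_nonneg: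
  assumes "fgm_valid 3 \<theta>"
  shows "0 \<le> fgm3_weight (\<theta> {0,1}) (\<theta> {0,2}) (\<theta> {1,2}) (\<theta> {0,1,2}) i0 i1 i2"
proof -
  define \<epsilon> :: "nat \<Rightarrow> real" where "\<epsilon> j = (-1) ^ (if j = 0 then i0 else if j = 1 then i1 else i2)" for j
  have "\<epsilon> j = 1 \<or> \<epsilon> j = -1" for j
    unfolding \<epsilon>_def by (metis neg_one_even_power neg_one_odd_power)
  then have "0 \<le> 1 + (\<Sum>S\<in>fgm_index_sets 3. \<theta> S * (\<Prod>j\<in>S. \<epsilon> j))"
    using assms unfolding fgm_valid_def by blast
  then show ?thesis
    by (simp add: sum_fgm_index_sets_3 fgm3_weight_def \<epsilon>_def power_add mult_ac)
qed

lemma fgm_copula_3_eq_mixture: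
  "fgm_copula 3 \<theta> u = (\<Sum>i0\<in>{0,1}. \<Sum>i1\<in>{0,1}. \<Sum>i2\<in>{0,1}.
     fgm3_weight (\<theta> {0,1}) (\<theta> {0,2}) (\<theta> {1,2}) (\<theta> {0,1,2}) i0 i1 i2
       * order_stat_cdf i0 (u 0) * order_stat_cdf i1 (u 1) * order_stat_cdf i2 (u 2))"
proof -
  let ?a = "\<lambda>j k. order_stat_cdf (k - 1) (u j)"
  have "(\<Prod>m<3. u m) = u 0 * u 1 * u 2"
    by (simp add: numeral_3_eq_3 lessThan_Suc numeral_2_eq_2)
  then have "fgm_copula 3 \<theta> u =
      (?a 0 1 + ?a 0 2) / 2 * ((?a 1 1 + ?a 1 2) / 2) * ((?a 2 1 + ?a 2 2) / 2)
      + \<theta> {0,1} / 4 * (?a 0 2 - ?a 0 1) * (?a 1 2 - ?a 1 1) * ((?a 2 1 + ?a 2 2) / 2)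
      + \<theta> {0,2} / 4 * (?a 0 2 - ?a 0 1) * ((?a 1 1 + ?a 1 2) / 2) * (?a 2 2 - ?a 2 1)
      + \<theta> {1,2} / 4 * ((?a 0 1 + ?a 0 2) / 2) * (?a 1 2 - ?a 1 1) * (?a 2 2 - ?a 2 1)
      - \<theta> {0,1,2} / 8 * (?a 0 2 - ?a 0 1) * (?a 1 2 - ?a 1 1) * (?a 2 2 - ?a 2 1)"
    by (simp add: fgm_copula_def sum_fgm_index_sets_3 order_stat_cdf_def power2_eq_square field_simps)
  also have "\<dots> = (\<Sum>i0\<in>{0,1}. \<Sum>i1\<in>{0,1}. \<Sum>i2\<in>{0,1}.
     fgm3_weight (\<theta> {0,1}) (\<theta> {0,2}) (\<theta> {1,2}) (\<theta> {0,1,2}) i0 i1 i2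
       * ?a 0 (1+i0) * ?a 1 (1+i1) * ?a 2 (1+i2))"
    by (rule sum_fgm3_weight[symmetric])
  finally show ?thesis
    by simp
qed

section \<open>The collective risk model\<close>

lemma crm_measurable:
  assumes "crm M N X"
  shows "N \<in> M \<rightarrow>\<^sub>M count_space UNIV" and "1 \<le> j \<Longrightarrow> X j \<in> borel_measurable M"
  using assms by (simp_all add: crm_def)

lemma crm_FGM_trivariate:
  assumes "crm_FGM M N X \<theta>" and "le_sup_support 2 M N"
  shows "fgm_valid 3 (\<theta> 2)"
    and "joint_cdf M N X 2 n x = fgm_copula 3 (\<theta> 2) (\<lambda>m. if m = 0 then cdf_N M N n else cdf_X M X (x m))"
  using assms unfolding crm_FGM_def by (auto simp: numeral_3_eq_3 numeral_2_eq_2)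

lemma crm_FGM_cdf_N_X1_X2:
  assumes fgm: "crm_FGM M N X \<theta>" and supp: "le_sup_support 2 M N"
  shows "measure M {\<omega> \<in> space M. real (N \<omega>) \<le> t \<and> X 1 \<omega> \<le> x \<and> X 2 \<omega> \<le> y} =
    (\<Sum>i0\<in>{0,1}. \<Sum>i1\<in>{0,1}. \<Sum>i2\<in>{0,1}.
       fgm3_weight (\<theta> 2 {0,1}) (\<theta> 2 {0,2}) (\<theta> 2 {1,2}) (\<theta> 2 {0,1,2}) i0 i1 i2
       * order_stat_cdf i0 (measure M {\<omega> \<in> space M. real (N \<omega>) \<le> t})
       * order_stat_cdf i1 (cdf_X M X x) * order_stat_cdf i2 (cdf_X M X y))"
proof (cases "t < 0")
  case True
  then show ?thesis
    by (simp add: order_stat_cdf_def)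
next
  case False
  define n where "n = nat \<lfloor>t\<rfloor>"
  define x' where "x' j = (if j = 1 then x else y)" for j :: nat
  have N_le: "real (N \<omega>) \<le> t \<longleftrightarrow> N \<omega> \<le> n" for \<omega>
    using False unfolding n_def by linarith
  have "{\<omega> \<in> space M. real (N \<omega>) \<le> t \<and> X 1 \<omega> \<le> x \<and> X 2 \<omega> \<le> y} =
      {\<omega> \<in> space M. N \<omega> \<le> n \<and> (\<forall>j\<in>{1..2}. X j \<omega> \<le> x' j)}"
    by (auto simp: N_le x'_def numeral_2_eq_2 le_Suc_eq)
  then have "measure M {\<omega> \<in> space M. real (N \<omega>) \<le> t \<and> X 1 \<omega> \<le> x \<and> X 2 \<omega> \<le> y} =
      joint_cdf M N X 2 n x'"
    by (simp add: joint_cdf_def)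
  also have "\<dots> = fgm_copula 3 (\<theta> 2) (\<lambda>m. if m = 0 then cdf_N M N n else cdf_X M X (x' m))"
    by (rule crm_FGM_trivariate(2)[OF fgm supp])
  finally show ?thesis
    by (simp add: fgm_copula_3_eq_mixture cdf_N_def N_le x'_def)
qed

lemma crm_FGM_law_N_X1_X2_atMost:
  fixes M :: "'a measure" and N :: "'a \<Rightarrow> nat" and X :: "nat \<Rightarrow> 'a \<Rightarrow> real"
  defines "DN \<equiv> distr M (count_space UNIV) N" and "DX \<equiv> distr M borel (X 1)"
  assumes fgm: "crm_FGM M N X \<theta>" and supp: "le_sup_support 2 M N"
  shows "measure (distr M borel (\<lambda>\<omega>. (real (N \<omega>), X 1 \<omega>, X 2 \<omega>))) {..(t, x, y)} =
    (\<Sum>i\<in>{0,1} \<times> {0,1} \<times> {0,1}.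
      fgm3_weight (\<theta> 2 {0,1}) (\<theta> 2 {0,2}) (\<theta> 2 {1,2}) (\<theta> 2 {0,1,2}) (fst i) (fst (snd i)) (snd (snd i))
      * (measure (order_stat_law DN real (fst i)) {..t} * (measure (order_stat_law DX (\<lambda>v. v) (fst (snd i))) {..x}
          * measure (order_stat_law DX (\<lambda>v. v) (snd (snd i))) {..y})))"
proof -
  have crm: "crm M N X"
    using fgm by (simp add: crm_FGM_def)
  interpret prob_space M
    using crm by (simp add: crm_def)
  note [measurable] = crm_measurable[OF crm]
  have law: "measure (distr M borel (\<lambda>\<omega>. (real (N \<omega>), X 1 \<omega>, X 2 \<omega>))) {..(t, x, y)} =
      measure M {\<omega> \<in> space M. real (N \<omega>) \<le> t \<and> X 1 \<omega> \<le> x \<and> X 2 \<omega> \<le> y}"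
    by (subst measure_distr) (auto intro!: arg_cong2[where f=measure] simp: less_eq_prod_def)
  have N_law: "measure (order_stat_law DN real j) {..t} =
      order_stat_cdf j (measure M {\<omega> \<in> space M. real (N \<omega>) \<le> t})" for j
    unfolding DN_def by (subst measure_order_stat_law_atMost)
      (simp_all add: prob_space_distr mono_def measure_distr vimage_def Int_def conj_commute)
  have X_law: "measure (order_stat_law DX (\<lambda>v. v) j) {..x} = order_stat_cdf j (cdf_X M X x)" for j x
    unfolding DX_def by (subst measure_order_stat_law_atMost)
      (simp_all add: prob_space_distr mono_def cdf_X_def measure_distr vimage_def Int_def conj_commute)
  show ?thesis
    unfolding law N_law X_law crm_FGM_cdf_N_X1_X2[OF fgm supp]
    by (simp add: sum.cartesian_product[symmetric] mult_ac)
qed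

lemma crm_FGM_integral_N_X1_X2:
  fixes M :: "'a measure" and N :: "'a \<Rightarrow> nat" and X :: "nat \<Rightarrow> 'a \<Rightarrow> real"
    and \<phi>0 :: "nat \<Rightarrow> real" and g1 g2 :: "real \<Rightarrow> real"
  defines "DN \<equiv> distr M (count_space UNIV) N" and "DX \<equiv> distr M borel (X 1)"
  assumes fgm: "crm_FGM M N X \<theta>" and supp: "le_sup_support 2 M N"
    and int0: "integrable_os DN \<phi>0" and int1: "integrable_os DX g1" and int2: "integrable_os DX g2"
  shows "(\<integral>\<omega>. \<phi>0 (N \<omega>) * g1 (X 1 \<omega>) * g2 (X 2 \<omega>) \<partial>M) =
    (\<Sum>i0\<in>{0,1}. \<Sum>i1\<in>{0,1}. \<Sum>i2\<in>{0,1}.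
       fgm3_weight (\<theta> 2 {0,1}) (\<theta> 2 {0,2}) (\<theta> 2 {1,2}) (\<theta> 2 {0,1,2}) i0 i1 i2
       * exp_os DN (1+i0) \<phi>0 * exp_os DX (1+i1) g1 * exp_os DX (1+i2) g2)"
proof -
  have crm: "crm M N X"
    using fgm by (simp add: crm_FGM_def)
  interpret prob_space M
    using crm by (simp add: crm_def)
  note [measurable] = crm_measurable[OF crm]
  have [measurable]: "g1 \<in> borel_measurable borel" "g2 \<in> borel_measurable borel"
    using int1 int2 by (auto simp: DX_def intro: borel_measurable_integrable_os)
  define \<psi>0 where "\<psi>0 t = \<phi>0 (nat \<lfloor>t\<rfloor>)" for t :: real
  have [measurable]: "\<psi>0 \<in> borel_measurable borel"
    unfolding \<psi>0_def by measurable
  have DN: "prob_space DN" "mono real" "real \<in> borel_measurable DN"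
    and DX: "prob_space DX" "mono (\<lambda>v::real. v)" "(\<lambda>v. v) \<in> borel_measurable DX"
    unfolding DN_def DX_def by (simp_all add: prob_space_distr mono_def)
  have int_A: "has_bochner_integral (order_stat_law DN real j) \<psi>0 (exp_os DN (1 + j) \<phi>0)" for j
    using int0 by (intro has_bochner_integral_order_stat_law[OF DN]) (auto simp: \<psi>0_def)
  have int_B: "has_bochner_integral (order_stat_law DX (\<lambda>v. v) j) g (exp_os DX (1 + j) g)"
    if "integrable_os DX g" "g \<in> borel_measurable borel" for j g
    using that by (intro has_bochner_integral_order_stat_law[OF DX]) auto
  have "has_bochner_integral (distr M borel (\<lambda>\<omega>. (real (N \<omega>), X 1 \<omega>, X 2 \<omega>))) (\<lambda>(t, x, y). \<psi>0 t * (g1 x * g2 y))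
    (\<Sum>i\<in>{0,1} \<times> {0,1} \<times> {0,1}.
      fgm3_weight (\<theta> 2 {0,1}) (\<theta> 2 {0,2}) (\<theta> 2 {1,2}) (\<theta> 2 {0,1,2}) (fst i) (fst (snd i)) (snd (snd i))
      * (exp_os DN (1 + fst i) \<phi>0 * (exp_os DX (1 + fst (snd i)) g1 * exp_os DX (1 + snd (snd i)) g2)))"
    using has_bochner_integral_cdf_product_mixture[OF crm_FGM_law_N_X1_X2_atMost[OF fgm supp, folded DN_def DX_def],
        of \<psi>0 g1 g2]
      fgm3_weight_nonneg[OF crm_FGM_trivariate(1)[OF fgm supp]] int_A int_B int1 int2
      prob_space_order_stat_law[OF DN] sets_order_stat_law[OF DN]
      prob_space_order_stat_law[OF DX] sets_order_stat_law[OF DX]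
    by (simp add: prob_space_distr has_bochner_integral_iff)
  moreover have "(\<lambda>(t, x, y). \<psi>0 t * (g1 x * g2 y)) \<in> borel_measurable (borel \<Otimes>\<^sub>M (borel \<Otimes>\<^sub>M borel))"
    by measurable
  ultimately show ?thesis
    by (subst (asm) has_bochner_integral_iff, subst (asm) integral_distr)
      (auto simp: borel_prod \<psi>0_def sum.cartesian_product[symmetric] mult_ac)
qed

lemma crm_FGM_star_integral_swap:
  fixes \<phi>0 :: "nat \<Rightarrow> real" and g :: "real \<Rightarrow> real"
  assumes cls: "crm_FGM_star M N X \<theta>" and supp: "le_sup_support 2 M N"
    and [measurable]: "g \<in> borel_measurable borel"
  shows "(\<integral>\<omega>. \<phi>0 (N \<omega>) * g (X 2 \<omega>) \<partial>M) = (\<integral>\<omega>. \<phi>0 (N \<omega>) * g (X 1 \<omega>) \<partial>M)"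
proof -
  have crm: "crm M N X"
    using cls by (simp add: crm_FGM_star_def crm_FGM_def)
  note [measurable] = crm_measurable[OF crm]
  define S where "S = count_space (UNIV :: nat set) \<Otimes>\<^sub>M (\<Pi>\<^sub>M j\<in>{1..2::nat}. (borel :: real measure))"
  define \<tau> where "\<tau> = Transposition.transpose (1::nat) 2"
  have \<tau>: "\<tau> permutes {1..2}" "\<tau> 1 = 2" "\<And>j. j \<in> {1..2} \<Longrightarrow> 1 \<le> \<tau> j"
    unfolding \<tau>_def by (auto intro: permutes_swap_id simp: Transposition.transpose_def)
  have swap: "distr M S (\<lambda>\<omega>. (N \<omega>, \<lambda>j\<in>{1..2}. X (\<tau> j) \<omega>)) = distr M S (\<lambda>\<omega>. (N \<omega>, \<lambda>j\<in>{1..2}. X j \<omega>))"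
    using cls supp \<tau>(1) unfolding crm_FGM_star_def S_def by auto
  have h: "(\<lambda>z. \<phi>0 (fst z) * g (snd z 1)) \<in> borel_measurable S"
    unfolding S_def by measurable
  have "(\<integral>\<omega>. \<phi>0 (N \<omega>) * g (X 2 \<omega>) \<partial>M) =
      integral\<^sup>L (distr M S (\<lambda>\<omega>. (N \<omega>, \<lambda>j\<in>{1..2}. X (\<tau> j) \<omega>))) (\<lambda>z. \<phi>0 (fst z) * g (snd z 1))"
    using \<tau>(2,3) h unfolding S_def by (subst integral_distr) (auto intro!: measurable_restrict)
  also have "\<dots> = (\<integral>\<omega>. \<phi>0 (N \<omega>) * g (X 1 \<omega>) \<partial>M)"
    unfolding swap using h unfolding S_def by (subst integral_distr) (auto intro!: measurable_restrict)
  finally show ?thesis .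
qed

lemma crm_FGM_star_integral_N_X1_X2:
  fixes M :: "'a measure" and N :: "'a \<Rightarrow> nat" and X :: "nat \<Rightarrow> 'a \<Rightarrow> real"
    and \<phi>0 :: "nat \<Rightarrow> real" and \<phi>1 \<phi>2 :: "real \<Rightarrow> real"
  defines "DN \<equiv> distr M (count_space UNIV) N" and "DX \<equiv> distr M borel (X 1)"
  assumes cls: "crm_FGM_star M N X \<theta>" and supp: "le_sup_support 2 M N"
    and int0: "integrable_os DN \<phi>0" and int1: "integrable_os DX \<phi>1" and int2: "integrable_os DX \<phi>2"
  shows "(\<integral>\<omega>. \<phi>0 (N \<omega>) * \<phi>1 (X 1 \<omega>) * \<phi>2 (X 2 \<omega>) \<partial>M) =
    (\<Sum>i0\<in>{0,1}. \<Sum>i1\<in>{0,1}. \<Sum>i2\<in>{0,1}.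
       fgm3_weight (\<theta> 2 {0,1}) (\<theta> 2 {0,1}) (\<theta> 2 {1,2}) (\<theta> 2 {0,1,2}) i0 i1 i2
       * exp_os DN (1+i0) \<phi>0 * exp_os DX (1+i1) \<phi>1 * exp_os DX (1+i2) \<phi>2)"
proof -
  have fgm: "crm_FGM M N X \<theta>"
    using cls by (simp add: crm_FGM_star_def)
  note mix = crm_FGM_integral_N_X1_X2[OF fgm supp, of \<phi>0, folded DN_def DX_def, OF int0]
  have "prob_space (DX \<Otimes>\<^sub>M DX)"
    using fgm unfolding DX_def crm_FGM_def crm_def
    by (intro prob_space_pair prob_space.prob_space_distr) auto
  then have one: "integrable_os DX (\<lambda>_. 1)" "exp_os DX k (\<lambda>_. 1) = 1" for k
    by (simp_all add: integrable_os_def exp_os_def prob_space_def finite_measure.integrable_const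
        prob_space.prob_space)
  let ?e0 = "\<lambda>k. exp_os DN k \<phi>0" and ?one = "\<lambda>k. exp_os DX k (\<lambda>_. 1)" and ?e2 = "\<lambda>k. exp_os DX k \<phi>2"
  have "(\<integral>\<omega>. \<phi>0 (N \<omega>) * 1 * \<phi>2 (X 2 \<omega>) \<partial>M) = (\<integral>\<omega>. \<phi>0 (N \<omega>) * \<phi>2 (X 1 \<omega>) * 1 \<partial>M)"
    using crm_FGM_star_integral_swap[OF cls supp, of \<phi>2 \<phi>0] int2
    by (simp add: DX_def borel_measurable_integrable_os)
  \<comment> \<open>both sides are instances of the mixture formula, differing only in \<theta>02 versus \<theta>01\<close>
  then have "(\<theta> 2 {0,2} - \<theta> 2 {0,1}) * (?e0 2 - ?e0 1) * (?e2 2 - ?e2 1) = 0"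
    unfolding mix[OF one(1) int2] mix[OF int2 one(1)]
      sum_fgm3_weight[where a="?e0" and b="?one" and c="?e2"] sum_fgm3_weight[where a="?e0" and b="?e2" and c="?one"]
    by (simp add: one(2) field_simps)
  then show ?thesis
    using mix[OF int1 int2] sum_fgm3_weight_eq_symmetric by simp
qed

theorem mainTheorem2:
  fixes M :: "'a measure" and N :: "'a \<Rightarrow> nat" and X :: "nat \<Rightarrow> 'a \<Rightarrow> real"
    and \<theta> :: "nat \<Rightarrow> nat set \<Rightarrow> real"
    and \<phi>0 :: "nat \<Rightarrow> real" and \<phi>1 \<phi>2 :: "real \<Rightarrow> real"
  defines "DN \<equiv> distr M (count_space UNIV) N"
      and "DX \<equiv> distr M borel (X 1)"
      and "\<theta>01 \<equiv> \<theta> 2 {0, 1}" and "\<theta>12 \<equiv> \<theta> 2 {1, 2}" and "\<theta>012 \<equiv> \<theta> 2 {0, 1, 2}"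
  assumes cls: "crm_FGM_star M N X \<theta>"
    and supA: "le_sup_support 2 M N"
    and int_joint: "integrable M (\<lambda>\<omega>. \<phi>0 (N \<omega>) * \<phi>1 (X 1 \<omega>) * \<phi>2 (X 2 \<omega>))"
    and int0: "integrable M (\<lambda>\<omega>. \<phi>0 (N \<omega>))"
    and int1: "integrable M (\<lambda>\<omega>. \<phi>1 (X 1 \<omega>))"
    and int2: "integrable M (\<lambda>\<omega>. \<phi>2 (X 1 \<omega>))"
    and int0os: "integrable_os DN \<phi>0"
    and int1os: "integrable_os DX \<phi>1"
    and int2os: "integrable_os DX \<phi>2"
  shows "(\<integral>\<omega>. \<phi>0 (N \<omega>) * \<phi>1 (X 1 \<omega>) * \<phi>2 (X 2 \<omega>) \<partial>M) =
           (\<Sum>i0\<in>{0,1::nat}. \<Sum>i1\<in>{0,1::nat}. \<Sum>i2\<in>{0,1::nat}.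
              (1/8) * (1 + (-1)^(i0+i1) * \<theta>01 + (-1)^(i0+i2) * \<theta>01
                         + (-1)^(i1+i2) * \<theta>12 + (-1)^(i0+i1+i2) * \<theta>012)
              * exp_os DN (1+i0) \<phi>0 * exp_os DX (1+i1) \<phi>1 * exp_os DX (1+i2) \<phi>2)
       \<and> (\<integral>\<omega>. \<phi>0 (N \<omega>) * \<phi>1 (X 1 \<omega>) * \<phi>2 (X 2 \<omega>) \<partial>M) =
           (\<integral>\<omega>. \<phi>0 (N \<omega>) \<partial>M) * (\<integral>\<omega>. \<phi>1 (X 1 \<omega>) \<partial>M) * (\<integral>\<omega>. \<phi>2 (X 1 \<omega>) \<partial>M)
           + \<theta>01 / 4 * Delta DN \<phi>0
               * (exp_os DX 2 \<phi>1 * exp_os DX 2 \<phi>2 - exp_os DX 1 \<phi>1 * exp_os DX 1 \<phi>2)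
           + \<theta>12 / 4 * (\<integral>\<omega>. \<phi>0 (N \<omega>) \<partial>M) * Delta DX \<phi>1 * Delta DX \<phi>2
           - \<theta>012 / 8 * Delta DN \<phi>0 * Delta DX \<phi>1 * Delta DX \<phi>2
       \<and> ((\<integral>\<omega>. \<phi>0 (N \<omega>) \<partial>M) > 0 \<longrightarrow>
           (\<integral>\<omega>. \<phi>0 (N \<omega>) * \<phi>1 (X 1 \<omega>) * \<phi>2 (X 2 \<omega>) \<partial>M) / (\<integral>\<omega>. \<phi>0 (N \<omega>) \<partial>M) =
             (\<integral>\<omega>. \<phi>1 (X 1 \<omega>) \<partial>M) * (\<integral>\<omega>. \<phi>2 (X 1 \<omega>) \<partial>M)
             + \<theta>01 / 4 * (Delta DN \<phi>0 / (\<integral>\<omega>. \<phi>0 (N \<omega>) \<partial>M))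
                 * (exp_os DX 2 \<phi>1 * exp_os DX 2 \<phi>2 - exp_os DX 1 \<phi>1 * exp_os DX 1 \<phi>2)
             + \<theta>12 / 4 * Delta DX \<phi>1 * Delta DX \<phi>2
             - \<theta>012 / 8 * (Delta DN \<phi>0 / (\<integral>\<omega>. \<phi>0 (N \<omega>) \<partial>M)) * Delta DX \<phi>1 * Delta DX \<phi>2)"
proof -
  have crm: "crm M N X"
    using cls by (simp add: crm_FGM_star_def crm_FGM_def)
  then interpret prob_space M
    by (simp add: crm_def)
  note [measurable] = crm_measurable[OF crm]
  have [measurable]: "\<phi>1 \<in> borel_measurable borel" "\<phi>2 \<in> borel_measurable borel"
    using int1os int2os by (simp_all add: DX_def borel_measurable_integrable_os)
  let ?e0 = "\<lambda>k. exp_os DN k \<phi>0" and ?e1 = "\<lambda>k. exp_os DX k \<phi>1" and ?e2 = "\<lambda>k. exp_os DX k \<phi>2"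
  have first_form: "(\<integral>\<omega>. \<phi>0 (N \<omega>) * \<phi>1 (X 1 \<omega>) * \<phi>2 (X 2 \<omega>) \<partial>M) =
      (\<Sum>i0\<in>{0,1}. \<Sum>i1\<in>{0,1}. \<Sum>i2\<in>{0,1}.
        fgm3_weight \<theta>01 \<theta>01 \<theta>12 \<theta>012 i0 i1 i2 * ?e0 (1+i0) * ?e1 (1+i1) * ?e2 (1+i2))"
    using crm_FGM_star_integral_N_X1_X2[OF cls supA, folded DN_def DX_def, OF int0os int1os int2os]
    by (simp add: \<theta>01_def \<theta>12_def \<theta>012_def)
  have mean0: "(\<integral>\<omega>. \<phi>0 (N \<omega>) \<partial>M) = (?e0 1 + ?e0 2) / 2"
    unfolding DN_def using int0 int0os[unfolded DN_def]
    by (intro integral_eq_mean_exp_os[OF prob_space_axioms]) simp_all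
  have mean1: "(\<integral>\<omega>. \<phi>1 (X 1 \<omega>) \<partial>M) = (?e1 1 + ?e1 2) / 2"
    unfolding DX_def using int1 int1os[unfolded DX_def]
    by (intro integral_eq_mean_exp_os[OF prob_space_axioms]) simp_all
  have mean2: "(\<integral>\<omega>. \<phi>2 (X 1 \<omega>) \<partial>M) = (?e2 1 + ?e2 2) / 2"
    unfolding DX_def using int2 int2os[unfolded DX_def]
    by (intro integral_eq_mean_exp_os[OF prob_space_axioms]) simp_all
  have second_form: "(\<integral>\<omega>. \<phi>0 (N \<omega>) * \<phi>1 (X 1 \<omega>) * \<phi>2 (X 2 \<omega>) \<partial>M) =
           (\<integral>\<omega>. \<phi>0 (N \<omega>) \<partial>M) * (\<integral>\<omega>. \<phi>1 (X 1 \<omega>) \<partial>M) * (\<integral>\<omega>. \<phi>2 (X 1 \<omega>) \<partial>M)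
           + \<theta>01 / 4 * Delta DN \<phi>0
               * (exp_os DX 2 \<phi>1 * exp_os DX 2 \<phi>2 - exp_os DX 1 \<phi>1 * exp_os DX 1 \<phi>2)
           + \<theta>12 / 4 * (\<integral>\<omega>. \<phi>0 (N \<omega>) \<partial>M) * Delta DX \<phi>1 * Delta DX \<phi>2
           - \<theta>012 / 8 * Delta DN \<phi>0 * Delta DX \<phi>1 * Delta DX \<phi>2"
    unfolding first_form sum_fgm3_weight_symmetric[where a="?e0" and b="?e1" and c="?e2"] mean0 mean1 mean2
      Delta_def ..
  show ?thesis
    by (intro conjI impI first_form[unfolded fgm3_weight_def] second_form) (unfold second_form, simp add: field_simps)
qed

end
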